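(* For every integer $k\ge2$, \[\mathsf P(k)=\mathsf I(k)\oplus\underline x\,\mathsf P(k-2)\,\underline x,\] where $\underline x\,\mathsf P(k-2)\,\underline x=\{\underline xP(\underline x)\underline x: P\in\mathsf P(k-2)\}$. Moreover, $\mathsf I(k)$ and $\underline x\,\mathsf P(k-2)\,\underline x$ are orthogonal with respect to $\langle\cdot,\cdot\rangle_k$; in fact $\mathsf I(k)$ is exactly the orthogonal complement of $\underline x\,\mathsf P(k-2)\,\underline x$ in $\mathsf P(k)$.
   Context: $\mathbb R_{0,m}$ is the $2^m$-dimensional real Clifford algebra generated by the orthonormal basis $e_1,\dots,e_m$ of $\mathbb R^m$ with relations $e_je_k+e_ke_j=-2\delta_{jk}$, with basis $e_A$ ($A\subseteq\{1,\dots,m\}$, $e_\emptyset=1$). For $a=\sum_Aa_Ae_A$, $[a]_0=a_\emptyset$ and the conjugation is $\overline a=\sum_Aa_A\overline{e_A}$, $\overline{e_A}=(-1)^{|A|(|A|+1)/2}e_A$. A point of $\mathbb R^m$ is identified with $\underline x=\sum_jx_je_j$. The Dirac operator $\partial_{\underline x}=\sum_je_j\partial_{x_j}$, and $\partial_{\underline x}f\partial_{\underline x}=\sum_{i,j}e_i(\partial_{x_i}\partial_{x_j}f)e_j$. $\mathsf P(k)$ is the real vector space of $\mathbb R_{0,m}$-valued homogeneous polynomials of degree $k$ on $\mathbb R^m$, and $\mathsf I(k)=\{P\in\mathsf P(k):\partial_{\underline x}P\partial_{\underline x}=0\}$ is the subspace of inframonogenic homogeneous polynomials of degree $k$. For $P_k=\sum_Ae_Ap_A(\underline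 x)$ with real homogeneous polynomials $p_A$, let $\overline{P_k(\partial_{\underline x})}=\sum_A\overline{e_A}\,p_A(\partial_{x_1},\dots,\partial_{x_m})$, and define the inner product $\langle P_k,Q_k\rangle_k=\big[\overline{P_k(\partial_{\underline x})}\,Q_k(\underline x)\big]_0$ on $\mathsf P(k)$. *)

theory Defs
  imports Complex_Main "HOL-Library.Function_Algebras"
begin

text \<open>An element of R_{0,m} is represented by its coefficient function
  A \<mapsto> a_A on finite index sets A (basis blades e_A, indices 0..m-1,
  i.e. e_1..e_m of the paper are e_0..e_{m-1} here).\<close>

type_synonym clif = "nat set \<Rightarrow> real"

definition cl_elem :: "nat \<Rightarrow> clif \<Rightarrow> bool" where
  "cl_elem m a \<longleftrightarrow> (\<forall>A. \<not> A \<subseteq> {..<m} \<longrightarrow> a A = 0)"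

definition cl_zero :: clif where
  "cl_zero = (\<lambda>_. 0)"

definition cl_basis :: "nat set \<Rightarrow> clif" where
  "cl_basis A = (\<lambda>B. if B = A then 1 else 0)"

definition cl_e :: "nat \<Rightarrow> clif" where
  "cl_e j = cl_basis {j}"

text \<open>Sign with e_A e_B = sign(A,B) e_{A \<triangle> B}, for e_A the ordered product
  of the e_j (j \<in> A increasing) and e_j e_k + e_k e_j = -2 \<delta>_{jk}.\<close>
definition cl_sign :: "nat set \<Rightarrow> nat set \<Rightarrow> real" where
  "cl_sign A B = (-1) ^ (card {(a, b). a \<in> A \<and> b \<in> B \<and> b < a} + card (A \<inter> B))"

definition cl_mult :: "nat \<Rightarrow> clif \<Rightarrow> clif \<Rightarrow> clif" where
  "cl_mult m a b = (\<lambda>C. \<Sum>A\<in>Pow {..<m}. \<Sum>B\<in>Pow {..<m}.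
      if (A - B) \<union> (B - A) = C then cl_sign A B * a A * b B else 0)"

definition cl_add :: "clif \<Rightarrow> clif \<Rightarrow> clif" where
  "cl_add a b = (\<lambda>A. a A + b A)"

definition cl_scale :: "real \<Rightarrow> clif \<Rightarrow> clif" where
  "cl_scale c a = (\<lambda>A. c * a A)"

definition cl_conj :: "clif \<Rightarrow> clif" where
  "cl_conj a = (\<lambda>A. (-1) ^ (card A * (card A + 1) div 2) * a A)"

definition cl_scalar :: "clif \<Rightarrow> real" where
  "cl_scalar a = a {}"

text \<open>A polynomial is represented by its coefficient function on monomials
  x^\<alpha> (\<alpha> a multi-index \<alpha> :: nat \<Rightarrow> nat), with Clifford coefficients.\<close>

type_synonym cpoly = "(nat \<Rightarrow> nat) \<Rightarrow> clif"

definition monomials :: "nat \<Rightarrow> nat \<Rightarrow> (nat \<Rightarrow> nat) set" where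
  "monomials m k = {\<alpha>. (\<forall>i\<ge>m. \<alpha> i = 0) \<and> (\<Sum>i<m. \<alpha> i) = k}"

definition pzero :: cpoly where
  "pzero = (\<lambda>_. cl_zero)"

definition padd :: "cpoly \<Rightarrow> cpoly \<Rightarrow> cpoly" where
  "padd P Q = (\<lambda>\<alpha>. cl_add (P \<alpha>) (Q \<alpha>))"

definition hom_poly :: "nat \<Rightarrow> nat \<Rightarrow> cpoly set" where
  "hom_poly m k = {P. (\<forall>\<alpha>. P \<alpha> \<noteq> cl_zero \<longrightarrow> \<alpha> \<in> monomials m k) \<and> (\<forall>\<alpha>. cl_elem m (P \<alpha>))}"

definition pder :: "nat \<Rightarrow> cpoly \<Rightarrow> cpoly" where
  "pder j P = (\<lambda>\<alpha>. cl_scale (real (\<alpha> j + 1)) (P (\<alpha>(j := \<alpha> j + 1))))"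

definition mulx :: "nat \<Rightarrow> cpoly \<Rightarrow> cpoly" where
  "mulx j P = (\<lambda>\<alpha>. if 0 < \<alpha> j then P (\<alpha>(j := \<alpha> j - 1)) else cl_zero)"

definition dpow :: "nat \<Rightarrow> (nat \<Rightarrow> nat) \<Rightarrow> cpoly \<Rightarrow> cpoly" where
  "dpow m \<alpha> P = foldr (\<lambda>j. pder j ^^ \<alpha> j) [0..<m] P"

definition dirac_sandwich :: "nat \<Rightarrow> cpoly \<Rightarrow> cpoly" where
  "dirac_sandwich m P = (\<lambda>\<alpha>. \<Sum>i<m. \<Sum>j<m.
      cl_mult m (cl_mult m (cl_e i) (pder i (pder j P) \<alpha>)) (cl_e j))"

definition x_sandwich :: "nat \<Rightarrow> cpoly \<Rightarrow> cpoly" where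
  "x_sandwich m P = (\<lambda>\<alpha>. \<Sum>i<m. \<Sum>j<m.
      cl_mult m (cl_mult m (cl_e i) (mulx i (mulx j P) \<alpha>)) (cl_e j))"

definition infra :: "nat \<Rightarrow> nat \<Rightarrow> cpoly set" where
  "infra m k = {P \<in> hom_poly m k. dirac_sandwich m P = pzero}"

definition xPx :: "nat \<Rightarrow> nat \<Rightarrow> cpoly set" where
  "xPx m k = x_sandwich m ` hom_poly m (k - 2)"

text \<open>Fischer inner product <P,Q>_k = [ conj(P(\<partial>)) Q(x) ]_0, where
  conj(P(\<partial>)) = \<Sum>_\<alpha> conj(P_\<alpha>) \<partial>^\<alpha>; for P, Q of degree k the result is
  a constant (the coefficient of the monomial x^0).\<close>
definition fischer :: "nat \<Rightarrow> nat \<Rightarrow> cpoly \<Rightarrow> cpoly \<Rightarrow> real" where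
  "fischer m k P Q = cl_scalar (\<Sum>\<alpha>\<in>monomials m k.
      cl_mult m (cl_conj (P \<alpha>)) (dpow m \<alpha> Q (\<lambda>_. 0)))"

end

theory Submission imports Defs begin

(* The proof is an instance of an abstract fact about an adjoint pair: if \<open>X : W \<rightarrow> V\<close>
   and \<open>D : V \<rightarrow> W\<close> satisfy \<open>\<langle>X w, v\<rangle>_V = \<langle>w, D v\<rangle>_W\<close> for positive definite forms,
   and \<open>W\<close> is finite dimensional, then \<open>V = ker D \<oplus> range X\<close> orthogonally and
   \<open>ker D = (range X)\<^sup>\<bottom>\<close> (Gram--Schmidt against the finitely many vectors \<open>X e\<close>).

   It is applied with \<open>V = P(k)\<close>, \<open>W = P(k-2)\<close>, \<open>X R = x R x\<close>, \<open>D P = \<partial>P\<partial>\<close> and the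
   Fischer product.  The work lies in the adjointness \<open>\<langle>x R x, Q\<rangle>_k = \<langle>R, \<partial>Q\<partial>\<rangle>_{k-2}\<close>:
     - in the Clifford algebra, the scalar part of \<open>conj(a) b\<close> is the Euclidean inner
       product of coefficients, for which \<open>y \<mapsto> e_i y e_j\<close> is self-adjoint;
     - the Fischer product is \<open>\<Sum>_\<alpha> \<alpha>! \<langle>P_\<alpha>, Q_\<alpha>\<rangle>\<close>, hence positive definite, and
       multiplication by \<open>x_p\<close> is adjoint to \<open>\<partial>_{x_p}\<close>. *)

instantiation "fun" :: (type, real_vector) real_vector
begin
definition scaleR_fun :: "real \<Rightarrow> ('a \<Rightarrow> 'b) \<Rightarrow> 'a \<Rightarrow> 'b" where
  "scaleR_fun r f = (\<lambda>x. r *\<^sub>R f x)"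
instance by standard (auto simp: scaleR_fun_def fun_eq_iff scaleR_add_right scaleR_add_left)
end

lemma scaleR_fun_apply [simp]: "(c *\<^sub>R f) x = c *\<^sub>R f x"
  by (simp add: scaleR_fun_def)

lemma sum_fun_apply: "(sum f I) x = (\<Sum>i\<in>I. f i x)"
  by (induct I rule: infinite_finite_induct) auto

lemma cl_zero_eq: "cl_zero = 0"
  by (simp add: cl_zero_def fun_eq_iff)

lemma pzero_eq: "pzero = 0"
  by (simp add: pzero_def cl_zero_eq fun_eq_iff)

lemma padd_eq: "padd P Q = P + Q"
  by (simp add: padd_def cl_add_def fun_eq_iff)

lemma cl_scale_eq: "cl_scale c a = c *\<^sub>R a"
  by (simp add: cl_scale_def fun_eq_iff)

section \<open>Orthogonal decomposition with respect to an adjoint pair\<close>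

text \<open>A symmetric bilinear form which is positive definite on a subspace \<open>V\<close>
  (definiteness is only required in the form \<open>B x x = 0 \<Longrightarrow> x = 0\<close>, which is
  all that the argument uses).\<close>
locale pos_def_form =
  fixes B :: "'a::real_vector \<Rightarrow> 'a \<Rightarrow> real" and V :: "'a set"
  assumes add_left: "B (x + y) z = B x z + B y z"
    and scale_left: "B (c *\<^sub>R x) z = c * B x z"
    and sym: "B x y = B y x"
    and subspace: "subspace V"
    and definite: "x \<in> V \<Longrightarrow> B x x = 0 \<Longrightarrow> x = 0"
begin

lemma add_right: "B z (x + y) = B z x + B z y"
  using add_left sym by metis

lemma scale_right: "B z (c *\<^sub>R x) = c * B z x"
  using scale_left sym by metis

lemma zero_right: "B z 0 = 0"
  using scale_right[of z 0 0] by simp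

lemma orthogonal_span:
  assumes "\<forall>w\<in>S. B u w = 0" and "x \<in> span S"
  shows "B u x = 0"
  using assms(2) by (induction rule: span_induct_alt) (simp_all add: assms(1) add_right scale_right zero_right)

lemma orthogonal_decomposition:
  assumes "finite S" and "S \<subseteq> V" and "v \<in> V"
  shows "\<exists>u s. u \<in> V \<and> s \<in> span S \<and> v = u + s \<and> (\<forall>w\<in>S. B u w = 0)"
  using assms
proof (induction S arbitrary: v rule: finite_induct)
  case empty
  show ?case by (intro exI[of _ v] exI[of _ 0]) (simp add: empty.prems span_zero)
next
  case (insert w S)
  obtain u s where u: "u \<in> V" "s \<in> span S" "v = u + s" "\<forall>x\<in>S. B u x = 0"
    using insert.IH[of v] insert.prems by auto
  obtain u' s' where u': "u' \<in> V" "s' \<in> span S" "w = u' + s'" "\<forall>x\<in>S. B u' x = 0"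
    using insert.IH[of w] insert.prems by auto
  \<comment> \<open>Remove from \<open>u\<close> its component along \<open>u'\<close>, the part of \<open>w\<close> orthogonal to \<open>S\<close>.\<close>
  define t where "t = B u u' / B u' u'"
  define u'' where "u'' = u - t *\<^sub>R u'"
  have u''_form: "B u'' x = B u x - t * B u' x" for x
    using add_left[of u "- t *\<^sub>R u'" x] scale_left[of "- t" u' x] by (simp add: u''_def)
  have orth_S: "\<forall>x\<in>S. B u'' x = 0"
    using u(4) u'(4) by (simp add: u''_form)
  have orth_u': "B u'' u' = 0"
  proof (cases "B u' u' = 0")
    case True
    then have "u' = 0" using definite u'(1) by blast
    then show ?thesis by (simp add: u''_form zero_right)
  qed (simp add: u''_form t_def)
  have "B u'' w = 0"
    using orth_u' orthogonal_span[OF orth_S u'(2)] by (simp add: u'(3) add_right)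
  moreover have "u'' \<in> V"
    using u(1) u'(1) subspace by (simp add: u''_def subspace_diff subspace_scale)
  moreover have "s + t *\<^sub>R u' \<in> span (insert w S)"
  proof -
    have "u' = w - s'" using u'(3) by simp
    then have "u' \<in> span (insert w S)"
      using u'(2) span_mono[of S "insert w S"] by (auto intro: span_diff span_base)
    then show ?thesis
      using u(2) span_mono[of S "insert w S"] by (auto intro: span_add span_scale)
  qed
  moreover have "v = u'' + (s + t *\<^sub>R u')"
    using u(3) by (simp add: u''_def)
  ultimately show ?case using orth_S by blast
qed

end

locale adjoint_pair = V: pos_def_form BV V + W: pos_def_form BW W
  for BV :: "'a::real_vector \<Rightarrow> 'a \<Rightarrow> real" and V
  and BW :: "'b::real_vector \<Rightarrow> 'b \<Rightarrow> real" and W +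
  fixes X :: "'b \<Rightarrow> 'a" and D :: "'a \<Rightarrow> 'b" and E :: "'b set"
  assumes linear_X: "linear X"
    and X_into: "X ` W \<subseteq> V"
    and D_into: "D ` V \<subseteq> W"
    and adjoint: "w \<in> W \<Longrightarrow> v \<in> V \<Longrightarrow> BV (X w) v = BW w (D v)"
    and finite_E: "finite E" and E_subset: "E \<subseteq> W"
    and separating: "w \<in> W \<Longrightarrow> \<forall>e\<in>E. BW e w = 0 \<Longrightarrow> w = 0"
begin

lemma orthogonal_imp_kernel:
  assumes "v \<in> V" and "\<forall>e\<in>E. BV (X e) v = 0"
  shows "D v = 0"
  using assms D_into E_subset by (intro separating) (auto simp: adjoint[symmetric])

lemma kernel_orthogonal:
  assumes "v \<in> V" and "D v = 0" and "r \<in> X ` W"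
  shows "BV v r = 0"
proof -
  obtain w where "w \<in> W" "r = X w" using assms(3) by blast
  then show ?thesis using assms(1,2) by (metis V.sym adjoint W.zero_right)
qed

lemma kernel_eq_orthogonal_complement:
  "{v \<in> V. D v = 0} = {v \<in> V. \<forall>r\<in>X ` W. BV r v = 0}"
proof -
  have "D v = 0" if "v \<in> V" "\<forall>r\<in>X ` W. BV r v = 0" for v
    using that E_subset by (intro orthogonal_imp_kernel) auto
  then show ?thesis using kernel_orthogonal V.sym by fastforce
qed

lemma kernel_inter_range: "{v \<in> V. D v = 0} \<inter> X ` W = {0}"
proof -
  have "0 \<in> X ` W"
    using subspace_0[OF W.subspace] linear_0[OF linear_X] by (metis image_eqI)
  moreover have "0 \<in> V"
    using V.subspace by (rule subspace_0)
  moreover have "D 0 = 0"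
    using \<open>0 \<in> V\<close> by (intro orthogonal_imp_kernel) (simp_all add: V.zero_right)
  moreover have "v = 0" if "v \<in> V" "D v = 0" "v \<in> X ` W" for v
    using that kernel_orthogonal V.definite by blast
  ultimately show ?thesis by blast
qed

lemma kernel_plus_range: "V = {k + r | k r. k \<in> {v \<in> V. D v = 0} \<and> r \<in> X ` W}"
proof
  show "{k + r | k r. k \<in> {v \<in> V. D v = 0} \<and> r \<in> X ` W} \<subseteq> V"
    using X_into V.subspace by (auto intro: subspace_add)
  show "V \<subseteq> {k + r | k r. k \<in> {v \<in> V. D v = 0} \<and> r \<in> X ` W}"
  proof
    fix v assume "v \<in> V"
    moreover have "X ` E \<subseteq> V" using X_into E_subset by blast
    ultimately obtain u s where us: "u \<in> V" "s \<in> span (X ` E)" "v = u + s"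
        and orth: "\<forall>e\<in>E. BV u (X e) = 0"
      using V.orthogonal_decomposition[of "X ` E" v] finite_E by auto
    have "D u = 0" using us(1) orth by (intro orthogonal_imp_kernel) (simp_all add: V.sym)
    moreover have "s \<in> X ` W"
      using us(2) E_subset W.subspace linear_X
      by (meson image_mono linear_subspace_image span_minimal subsetD)
    ultimately show "v \<in> {k + r | k r. k \<in> {v \<in> V. D v = 0} \<and> r \<in> X ` W}"
      using us by blast
  qed
qed

end

section \<open>Multiplication by a generator in the Clifford algebra\<close>

text \<open>Multiplying a blade \<open>e_A\<close> by a generator \<open>e_i\<close> toggles \<open>i\<close> in \<open>A\<close>.\<close>
definition toggle :: "nat \<Rightarrow> nat set \<Rightarrow> nat set" where
  "toggle i A = sym_diff {i} A"

lemma sym_diff_eq_iff_right: "sym_diff A B = C \<longleftrightarrow> B = sym_diff A C"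
  by blast

lemma sym_diff_eq_iff_left: "sym_diff A B = C \<longleftrightarrow> A = sym_diff B C"
  by blast

lemma toggle_toggle [simp]: "toggle i (toggle i A) = A"
  unfolding toggle_def by blast

lemma toggle_commute: "toggle i (toggle j D) = toggle j (toggle i D)"
  unfolding toggle_def by blast

lemma toggle_Pow [simp]: "i < m \<Longrightarrow> toggle i C \<in> Pow {..<m} \<longleftrightarrow> C \<in> Pow {..<m}"
  unfolding toggle_def by auto

lemma finite_toggle [simp]: "finite (toggle i D) \<longleftrightarrow> finite D"
  unfolding toggle_def by auto

lemma mem_toggle_self: "i \<in> toggle i D \<longleftrightarrow> i \<notin> D"
  unfolding toggle_def by auto

lemma finite_Pow_lessThan: "D \<in> Pow {..<(m::nat)} \<Longrightarrow> finite D"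
  by (auto intro: finite_subset)

lemma parity_toggle:
  assumes "finite D"
  shows "(-1::real) ^ card {b \<in> toggle j D. P b} = (if P j then -1 else 1) * (-1) ^ card {b \<in> D. P b}"
proof (cases "P j")
  case False
  then have "{b \<in> toggle j D. P b} = {b \<in> D. P b}" unfolding toggle_def by auto
  then show ?thesis using False by simp
next
  case True
  have fin: "finite {b \<in> D. P b}" using assms by simp
  show ?thesis
  proof (cases "j \<in> D")
    case True
    then have "{b \<in> toggle j D. P b} = {b \<in> D. P b} - {j}" unfolding toggle_def by auto
    moreover have "card {b \<in> D. P b} = Suc (card ({b \<in> D. P b} - {j}))"
      using fin True \<open>P j\<close> card.remove[of "{b \<in> D. P b}" j] by simp
    ultimately show ?thesis using \<open>P j\<close> by simp
  next
    case False
    then have "{b \<in> toggle j D. P b} = insert j {b \<in> D. P b}" unfolding toggle_def using \<open>P j\<close> by auto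
    then show ?thesis using fin False \<open>P j\<close> by simp
  qed
qed

lemma sign_left:
  assumes "finite B"
  shows "cl_sign {i} B = (-1) ^ card {b \<in> B. b < i} * (if i \<in> B then -1 else 1)"
proof -
  have "{(a, b). a \<in> {i} \<and> b \<in> B \<and> b < a} = Pair i ` {b \<in> B. b < i}" by auto
  then have "card {(a, b). a \<in> {i} \<and> b \<in> B \<and> b < a} = card {b \<in> B. b < i}"
    by (simp add: card_image inj_on_def)
  moreover have "card ({i} \<inter> B) = (if i \<in> B then 1 else 0)" by auto
  ultimately show ?thesis unfolding cl_sign_def by (simp add: power_add)
qed

lemma sign_right:
  assumes "finite B"
  shows "cl_sign B {j} = (-1) ^ card {b \<in> B. j < b} * (if j \<in> B then -1 else 1)"
proof -
  have "{(a, b). a \<in> B \<and> b \<in> {j} \<and> b < a} = (\<lambda>a. (a, j)) ` {b \<in> B. j < b}" by auto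
  then have "card {(a, b). a \<in> B \<and> b \<in> {j} \<and> b < a} = card {b \<in> B. j < b}"
    by (simp add: card_image inj_on_def)
  moreover have "card (B \<inter> {j}) = (if j \<in> B then 1 else 0)" by auto
  ultimately show ?thesis unfolding cl_sign_def by (simp add: power_add)
qed

lemma mult_left:
  assumes "i < m"
  shows "cl_mult m (cl_e i) a C =
    (if C \<in> Pow {..<m} then cl_sign {i} (toggle i C) * a (toggle i C) else 0)"
proof -
  have "cl_mult m (cl_e i) a C = (\<Sum>A\<in>Pow {..<m}. if A = {i} then
      (\<Sum>B\<in>Pow {..<m}. if B = toggle i C then cl_sign {i} B * a B else 0) else 0)"
    unfolding cl_mult_def cl_e_def cl_basis_def sym_diff_eq_iff_right
    by (intro sum.cong refl) (auto simp: toggle_def)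
  moreover have "{i} \<in> Pow {..<m}" using assms by simp
  ultimately show ?thesis using assms by (simp add: sum.delta del: Pow_iff)
qed

lemma mult_right:
  assumes "j < m"
  shows "cl_mult m a (cl_e j) C =
    (if C \<in> Pow {..<m} then cl_sign (toggle j C) {j} * a (toggle j C) else 0)"
proof -
  have "cl_mult m a (cl_e j) C = (\<Sum>A\<in>Pow {..<m}. \<Sum>B\<in>Pow {..<m}. if B = {j} then
      (if A = toggle j C then cl_sign A {j} * a A else 0) else 0)"
    unfolding cl_mult_def cl_e_def cl_basis_def sym_diff_eq_iff_left
    by (intro sum.cong refl) (auto simp: toggle_def)
  moreover have "{j} \<in> Pow {..<m}" using assms by simp
  ultimately show ?thesis using assms by (simp add: sum.delta del: Pow_iff)
qed

lemma cl_mult_elem: "cl_elem m (cl_mult m a b)"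
  unfolding cl_elem_def cl_mult_def by (auto intro!: sum.neutral)

lemma sign_left_toggle: "finite D \<Longrightarrow> cl_sign {i} (toggle i D) = - cl_sign {i} D"
  by (simp add: sign_left parity_toggle mem_toggle_self)

lemma sign_right_toggle: "finite D \<Longrightarrow> cl_sign (toggle j D) {j} = - cl_sign D {j}"
  by (simp add: sign_right parity_toggle mem_toggle_self)

lemma mult_assoc_generators:
  assumes "i < m" "j < m"
  shows "cl_mult m (cl_e i) (cl_mult m y (cl_e j)) = cl_mult m (cl_mult m (cl_e i) y) (cl_e j)"
proof
  fix D
  show "cl_mult m (cl_e i) (cl_mult m y (cl_e j)) D = cl_mult m (cl_mult m (cl_e i) y) (cl_e j) D"
  proof (cases "D \<in> Pow {..<m}")
    case True
    let ?D' = "toggle i (toggle j D)"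
    have fin: "finite D" using True by (rule finite_Pow_lessThan)
    have mem: "j \<in> ?D' \<longleftrightarrow> (j \<notin> D \<longleftrightarrow> i \<noteq> j)" "i \<in> ?D' \<longleftrightarrow> (i \<notin> D \<longleftrightarrow> i \<noteq> j)"
      unfolding toggle_def by auto
    have "cl_mult m (cl_e i) (cl_mult m y (cl_e j)) D =
        cl_sign {i} (toggle i D) * (cl_sign ?D' {j} * y ?D')"
      using True assms by (simp add: mult_left mult_right toggle_commute[of j i] del: Pow_iff)
    also have "\<dots> = cl_sign (toggle j D) {j} * (cl_sign {i} ?D' * y ?D')"
      using fin mem by (simp add: sign_left sign_right parity_toggle mem_toggle_self)
    also have "\<dots> = cl_mult m (cl_mult m (cl_e i) y) (cl_e j) D"
      using True assms by (simp add: mult_left mult_right del: Pow_iff)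
    finally show ?thesis .
  qed (use assms in \<open>simp add: mult_left mult_right del: Pow_iff\<close>)
qed

lemma cl_mult_eq_sum:
  "cl_mult m a b C = (\<Sum>A\<in>Pow {..<m}. \<Sum>B\<in>Pow {..<m}.
     a A * b B * (if sym_diff A B = C then cl_sign A B else 0))"
  unfolding cl_mult_def by (intro sum.cong refl) simp

lemma linear_cl_mult_left: "linear (\<lambda>a. cl_mult m a b)"
  by (rule linearI) (simp_all add: fun_eq_iff cl_mult_eq_sum algebra_simps sum.distrib sum_distrib_left)

lemma linear_cl_mult_right: "linear (cl_mult m a)"
  by (rule linearI) (simp_all add: fun_eq_iff cl_mult_eq_sum algebra_simps sum.distrib sum_distrib_left)

definition cl_sandwich :: "nat \<Rightarrow> nat \<Rightarrow> nat \<Rightarrow> clif \<Rightarrow> clif" where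
  "cl_sandwich m i j x = cl_mult m (cl_mult m (cl_e i) x) (cl_e j)"

lemma linear_cl_sandwich: "linear (cl_sandwich m i j)"
  unfolding cl_sandwich_def[abs_def]
  using linear_compose[OF linear_cl_mult_right[of m "cl_e i"] linear_cl_mult_left[of m "cl_e j"]]
  by (simp add: cl_sandwich_def o_def)

section \<open>The Euclidean inner product on the Clifford algebra\<close>

definition cl_inner :: "nat \<Rightarrow> clif \<Rightarrow> clif \<Rightarrow> real" where
  "cl_inner m x y = (\<Sum>A\<in>Pow {..<m}. x A * y A)"

lemma sum_Pow_toggle:
  assumes "i < m"
  shows "(\<Sum>C\<in>Pow {..<m}. f C) = (\<Sum>D\<in>Pow {..<m}. f (toggle i D))"
  by (rule sum.reindex_bij_witness[where i="toggle i" and j="toggle i"])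
    (use assms in \<open>simp_all del: Pow_iff\<close>)

lemma inner_mult_left:
  assumes "i < m"
  shows "cl_inner m (cl_mult m (cl_e i) x) y = - cl_inner m x (cl_mult m (cl_e i) y)"
proof -
  have "cl_inner m (cl_mult m (cl_e i) x) y =
      (\<Sum>C\<in>Pow {..<m}. cl_sign {i} (toggle i C) * x (toggle i C) * y C)"
    unfolding cl_inner_def by (intro sum.cong refl) (simp add: mult_left[OF assms] del: Pow_iff)
  also have "\<dots> = (\<Sum>D\<in>Pow {..<m}. cl_sign {i} D * x D * y (toggle i D))"
    by (subst sum_Pow_toggle[OF assms]) simp
  also have "\<dots> = - cl_inner m x (cl_mult m (cl_e i) y)"
    unfolding cl_inner_def sum_negf[symmetric]
    by (intro sum.cong refl)
      (simp add: mult_left[OF assms] sign_left_toggle finite_Pow_lessThan del: Pow_iff)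
  finally show ?thesis .
qed

lemma inner_mult_right:
  assumes "j < m"
  shows "cl_inner m (cl_mult m x (cl_e j)) y = - cl_inner m x (cl_mult m y (cl_e j))"
proof -
  have "cl_inner m (cl_mult m x (cl_e j)) y =
      (\<Sum>C\<in>Pow {..<m}. cl_sign (toggle j C) {j} * x (toggle j C) * y C)"
    unfolding cl_inner_def by (intro sum.cong refl) (simp add: mult_right[OF assms] del: Pow_iff)
  also have "\<dots> = (\<Sum>D\<in>Pow {..<m}. cl_sign D {j} * x D * y (toggle j D))"
    by (subst sum_Pow_toggle[OF assms]) simp
  also have "\<dots> = - cl_inner m x (cl_mult m y (cl_e j))"
    unfolding cl_inner_def sum_negf[symmetric]
    by (intro sum.cong refl)
      (simp add: mult_right[OF assms] sign_right_toggle finite_Pow_lessThan del: Pow_iff)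
  finally show ?thesis .
qed

lemma inner_sandwich:
  assumes "i < m" "j < m"
  shows "cl_inner m (cl_sandwich m i j x) y = cl_inner m x (cl_sandwich m i j y)"
  using assms by (simp add: cl_sandwich_def inner_mult_left inner_mult_right mult_assoc_generators)

text \<open>Of the \<open>|A|\<^sup>2\<close> pairs in \<open>A \<times> A\<close>, \<open>|A|\<close> lie on the diagonal and half of the
  rest are decreasing.\<close>
lemma card_ordered_pairs:
  fixes A :: "nat set"
  assumes "finite A"
  shows "2 * card {(a, b). a \<in> A \<and> b \<in> A \<and> b < a} + card A = card A * card A"
proof -
  define L where "L = {(a, b). a \<in> A \<and> b \<in> A \<and> b < a}"
  define U where "U = {(a, b). a \<in> A \<and> b \<in> A \<and> a < b}"
  have AA: "A \<times> A = L \<union> U \<union> (\<lambda>a. (a, a)) ` A" unfolding L_def U_def by auto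
  have fin: "finite L" "finite U" using assms unfolding L_def U_def
    by (auto intro: finite_subset[of _ "A \<times> A"])
  have "U = (\<lambda>(a, b). (b, a)) ` L" unfolding L_def U_def by auto
  moreover have "inj_on (\<lambda>(a, b). (b, a)) L" by (auto simp: inj_on_def)
  ultimately have "card U = card L" by (simp add: card_image)
  moreover have "card (A \<times> A) = card L + card U + card A"
  proof -
    have "L \<inter> U = {}" "(L \<union> U) \<inter> (\<lambda>a. (a, a)) ` A = {}" unfolding L_def U_def by auto
    then show ?thesis
      unfolding AA using fin assms by (simp add: card_Un_disjoint card_image inj_on_def)
  qed
  ultimately show ?thesis by (simp add: L_def card_cartesian_product)
qed

text \<open>\<open>conj(e_A) e_A = 1\<close> for every blade.\<close>
lemma sign_conj:
  assumes "finite A"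
  shows "cl_sign A A * (-1) ^ (card A * (card A + 1) div 2) = (1::real)"
proof -
  define n where "n = card A"
  define p where "p = card {(a, b). a \<in> A \<and> b \<in> A \<and> b < a}"
  define t where "t = n * (n + 1) div 2"
  have "2 * p + n = n * n" using card_ordered_pairs[OF assms] unfolding p_def n_def .
  moreover have "2 * t = n * n + n" unfolding t_def by simp
  ultimately have "p + n + t = n * n + n" by linarith
  moreover have "even (n * n + n)" by simp
  ultimately have "even (p + n + t)" by (simp only:)
  have "cl_sign A A * (-1) ^ t = (-1::real) ^ (p + n + t)"
    unfolding cl_sign_def p_def n_def by (simp add: power_add)
  also have "\<dots> = 1" using \<open>even (p + n + t)\<close> by simp
  finally show ?thesis unfolding t_def n_def .
qed

lemma scalar_conj_mult: "cl_scalar (cl_mult m (cl_conj a) b) = cl_inner m a b"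
proof -
  have "cl_scalar (cl_mult m (cl_conj a) b) = (\<Sum>A\<in>Pow {..<m}. cl_sign A A * cl_conj a A * b A)"
    unfolding cl_scalar_def cl_mult_def sym_diff_eq_iff_right Un_empty Diff_empty
    by (intro sum.cong refl) (simp add: sum.delta del: Pow_iff)
  also have "\<dots> = cl_inner m a b"
    unfolding cl_inner_def cl_conj_def
    by (intro sum.cong refl) (metis finite_Pow_lessThan sign_conj mult.left_commute mult_1_right)
  finally show ?thesis .
qed

lemma inner_sym: "cl_inner m x y = cl_inner m y x"
  unfolding cl_inner_def by (simp add: mult.commute)

lemma linear_cl_inner: "linear (\<lambda>x. cl_inner m x y)"
  by (rule linearI) (simp_all add: cl_inner_def algebra_simps sum.distrib sum_distrib_left)

section \<open>Monomials and the Fischer inner product\<close>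

lemma finite_monomials: "finite (monomials m k)"
proof (rule finite_subset)
  show "monomials m k \<subseteq> {\<alpha>. \<forall>i. (i \<in> {..<m} \<longrightarrow> \<alpha> i \<in> {..k}) \<and> (i \<notin> {..<m} \<longrightarrow> \<alpha> i = 0)}"
    unfolding monomials_def by (auto intro: member_le_sum[of _ "{..<m}", simplified])
qed (rule finite_set_of_finite_funs; simp)

lemma monomials_raise:
  assumes "p < m"
  shows "\<alpha>(p := Suc (\<alpha> p)) \<in> monomials m (Suc k) \<longleftrightarrow> \<alpha> \<in> monomials m k"
proof -
  have "\<alpha>(p := Suc (\<alpha> p)) = (\<lambda>i. \<alpha> i + (if i = p then 1 else 0))" by auto
  then have "(\<Sum>i<m. (\<alpha>(p := Suc (\<alpha> p))) i) = Suc (\<Sum>i<m. \<alpha> i)"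
    using assms by (simp add: sum.distrib)
  then show ?thesis using assms unfolding monomials_def by auto
qed

definition mfact :: "nat \<Rightarrow> (nat \<Rightarrow> nat) \<Rightarrow> real" where
  "mfact m \<alpha> = (\<Prod>i<m. fact (\<alpha> i))"

lemma mfact_pos: "mfact m \<alpha> > 0"
  unfolding mfact_def by (rule prod_pos) simp

lemma mfact_raise:
  assumes "p < m"
  shows "mfact m (\<alpha>(p := Suc (\<alpha> p))) = real (Suc (\<alpha> p)) * mfact m \<alpha>"
proof -
  have "mfact m (\<alpha>(p := Suc (\<alpha> p))) = fact (Suc (\<alpha> p)) * (\<Prod>i\<in>{..<m} - {p}. fact (\<alpha> i))"
    unfolding mfact_def using assms by (simp add: prod.remove)
  moreover have "mfact m \<alpha> = fact (\<alpha> p) * (\<Prod>i\<in>{..<m} - {p}. fact (\<alpha> i))"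
    unfolding mfact_def using assms by (simp add: prod.remove)
  ultimately show ?thesis by simp
qed

lemma pder_power:
  "(pder p ^^ t) Q \<beta> = (\<Prod>s<t. real (\<beta> p + s + 1)) *\<^sub>R Q (\<beta>(p := \<beta> p + t))"
proof (induction t arbitrary: \<beta>)
  case (Suc t)
  have "(pder p ^^ Suc t) Q \<beta> = real (\<beta> p + 1) *\<^sub>R ((pder p ^^ t) Q) (\<beta>(p := \<beta> p + 1))"
    by (simp add: pder_def cl_scale_eq)
  also have "\<dots> = (real (\<beta> p + 1) * (\<Prod>s<t. real (\<beta> p + Suc s + 1))) *\<^sub>R Q (\<beta>(p := \<beta> p + Suc t))"
    unfolding Suc.IH by (simp add: algebra_simps)
  also have "real (\<beta> p + 1) * (\<Prod>s<t. real (\<beta> p + Suc s + 1)) = (\<Prod>s<Suc t. real (\<beta> p + s + 1))"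
    by (subst prod.lessThan_Suc_shift) simp
  finally show ?case .
qed simp

lemma foldr_pder:
  "foldr (\<lambda>j. pder j ^^ \<alpha> j) [0..<n] Q \<beta> =
     (\<Prod>j<n. \<Prod>s<\<alpha> j. real (\<beta> j + s + 1)) *\<^sub>R Q (\<lambda>i. if i < n then \<beta> i + \<alpha> i else \<beta> i)"
proof (induction n arbitrary: Q)
  case (Suc n)
  let ?\<gamma> = "\<lambda>i. if i < n then \<beta> i + \<alpha> i else \<beta> i"
  have "foldr (\<lambda>j. pder j ^^ \<alpha> j) [0..<Suc n] Q \<beta> =
      foldr (\<lambda>j. pder j ^^ \<alpha> j) [0..<n] ((pder n ^^ \<alpha> n) Q) \<beta>"
    by simp
  also have "\<dots> = (\<Prod>j<n. \<Prod>s<\<alpha> j. real (\<beta> j + s + 1)) *\<^sub>R ((pder n ^^ \<alpha> n) Q) ?\<gamma>"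
    by (rule Suc.IH)
  also have "((pder n ^^ \<alpha> n) Q) ?\<gamma> = (\<Prod>s<\<alpha> n. real (\<beta> n + s + 1)) *\<^sub>R Q (?\<gamma>(n := ?\<gamma> n + \<alpha> n))"
    by (simp add: pder_power)
  also have "?\<gamma>(n := ?\<gamma> n + \<alpha> n) = (\<lambda>i. if i < Suc n then \<beta> i + \<alpha> i else \<beta> i)"
    by (auto simp: fun_eq_iff)
  finally show ?case by (simp add: mult_ac)
qed simp

lemma dpow_at_origin:
  assumes "\<alpha> \<in> monomials m k"
  shows "dpow m \<alpha> Q (\<lambda>_. 0) = mfact m \<alpha> *\<^sub>R Q \<alpha>"
proof -
  have "(\<lambda>i. if i < m then 0 + \<alpha> i else 0) = \<alpha>"
    using assms unfolding monomials_def by (auto simp: fun_eq_iff)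
  moreover have "(\<Prod>s<t. real (0 + s + 1)) = fact t" for t
    by (induction t) (simp_all add: fact_Suc)
  ultimately show ?thesis unfolding dpow_def foldr_pder mfact_def by simp
qed

lemma fischer_coeffs:
  "fischer m k P Q = (\<Sum>\<alpha>\<in>monomials m k. mfact m \<alpha> * cl_inner m (P \<alpha>) (Q \<alpha>))"
  unfolding fischer_def cl_scalar_def sum_fun_apply
  by (intro sum.cong refl)
    (simp add: dpow_at_origin scalar_conj_mult[unfolded cl_scalar_def] linear_scale[OF linear_cl_inner]
      inner_sym[of m "P _"])

lemma hom_poly_iff:
  "P \<in> hom_poly m k \<longleftrightarrow> (\<forall>\<alpha>. \<alpha> \<notin> monomials m k \<longrightarrow> P \<alpha> = 0) \<and> (\<forall>\<alpha>. cl_elem m (P \<alpha>))"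
  unfolding hom_poly_def cl_zero_eq by blast

lemma subspace_hom_poly: "subspace (hom_poly m k)"
  by (auto simp: subspace_def hom_poly_iff cl_elem_def)

text \<open>A nonzero coefficient contributes positively to \<open>\<langle>P, P\<rangle>_k\<close>.\<close>
lemma fischer_definite:
  assumes P: "P \<in> hom_poly m k" and zero: "fischer m k P P = 0"
  shows "P = 0"
proof -
  have inner_nonneg: "0 \<le> cl_inner m x x" for x
    unfolding cl_inner_def by (rule sum_nonneg) simp
  have "cl_inner m (P \<alpha>) (P \<alpha>) = 0" if "\<alpha> \<in> monomials m k" for \<alpha>
  proof -
    have "mfact m \<alpha> * cl_inner m (P \<alpha>) (P \<alpha>) = 0"
      using zero that inner_nonneg mfact_pos[of m]
      by (subst (asm) fischer_coeffs, subst (asm) sum_nonneg_eq_0_iff)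
        (auto simp: finite_monomials less_imp_le)
    then show ?thesis using mfact_pos[of m \<alpha>] by simp
  qed
  then have "P \<alpha> A = 0" if "\<alpha> \<in> monomials m k" "A \<in> Pow {..<m}" for \<alpha> A
    using that unfolding cl_inner_def by (subst (asm) sum_nonneg_eq_0_iff) auto
  then show ?thesis using P unfolding hom_poly_iff cl_elem_def fun_eq_iff zero_fun_def
    by (metis PowI)
qed

lemma fischer_pos_def_form: "pos_def_form (fischer m k) (hom_poly m k)"
proof
  show "fischer m k (P + Q) R = fischer m k P R + fischer m k Q R" for P Q R
    by (simp add: fischer_coeffs linear_add[OF linear_cl_inner] distrib_left sum.distrib)
  show "fischer m k (c *\<^sub>R P) R = c * fischer m k P R" for c P R
    by (simp add: fischer_coeffs linear_scale[OF linear_cl_inner] sum_distrib_left mult_ac)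
  show "fischer m k P Q = fischer m k Q P" for P Q
    by (simp add: fischer_coeffs inner_sym)
qed (simp_all add: subspace_hom_poly fischer_definite)

lemma fischer_sum_left:
  "fischer m k (\<lambda>\<alpha>. \<Sum>i\<in>I. F i \<alpha>) Q = (\<Sum>i\<in>I. fischer m k (F i) Q)"
  unfolding fischer_coeffs linear_sum[OF linear_cl_inner] sum_distrib_left by (rule sum.swap)

text \<open>Multiplication by \<open>x_p\<close> is adjoint to \<open>\<partial>_{x_p}\<close>: reindex the sum by
  \<open>\<alpha> \<mapsto> \<alpha> + e_p\<close>; the monomials not divisible by \<open>x_p\<close> contribute nothing.\<close>
lemma fischer_mulx:
  assumes "p < m"
  shows "fischer m (Suc k) (mulx p R) Q = fischer m k R (pder p Q)"
proof -
  let ?raise = "\<lambda>\<beta>. \<beta>(p := Suc (\<beta> p))" and ?lower = "\<lambda>\<alpha>. \<alpha>(p := \<alpha> p - 1)"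
  have "fischer m k R (pder p Q) = fischer m (Suc k) (mulx p R) Q"
    unfolding fischer_coeffs
  proof (rule sum.reindex_bij_witness_not_neutral[where S'="{}" and j="?raise" and i="?lower"
        and T'="{\<alpha>\<in>monomials m (Suc k). \<alpha> p = 0}"])
    fix \<alpha> assume \<alpha>: "\<alpha> \<in> monomials m (Suc k) - {\<alpha>\<in>monomials m (Suc k). \<alpha> p = 0}"
    then have "?raise (?lower \<alpha>) = \<alpha>" by auto
    then show "?raise (?lower \<alpha>) = \<alpha>" "?lower \<alpha> \<in> monomials m k - {}"
      using \<alpha> monomials_raise[OF assms, of "?lower \<alpha>" k] by simp_all
  next
    fix \<beta> assume "\<beta> \<in> monomials m k"
    then show "mfact m (?raise \<beta>) * cl_inner m (mulx p R (?raise \<beta>)) (Q (?raise \<beta>)) =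
        mfact m \<beta> * cl_inner m (R \<beta>) (pder p Q \<beta>)"
      by (simp add: mulx_def pder_def cl_scale_eq mfact_raise[OF assms] inner_sym[of m "R _"]
          linear_scale[OF linear_cl_inner])
  qed (auto simp: finite_monomials monomials_raise[OF assms] mulx_def cl_zero_eq cl_inner_def)
  then show ?thesis ..
qed

lemma pder_commute: "pder i (pder j Q) = pder j (pder i Q)"
  by (cases "i = j") (auto simp: pder_def cl_scale_eq fun_eq_iff fun_upd_twist)

lemma pder_cl_sandwich: "pder p (\<lambda>\<alpha>. cl_sandwich m i j (Q \<alpha>)) = (\<lambda>\<alpha>. cl_sandwich m i j (pder p Q \<alpha>))"
  by (simp add: pder_def cl_scale_eq linear_scale[OF linear_cl_sandwich])

lemma fischer_cl_sandwich:
  assumes "i < m" "j < m"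
  shows "fischer m k (\<lambda>\<alpha>. cl_sandwich m i j (X \<alpha>)) Q = fischer m k X (\<lambda>\<alpha>. cl_sandwich m i j (Q \<alpha>))"
  by (simp add: fischer_coeffs inner_sandwich[OF assms])

lemma x_sandwich_eq: "x_sandwich m R = (\<lambda>\<alpha>. \<Sum>i<m. \<Sum>j<m. cl_sandwich m i j (mulx i (mulx j R) \<alpha>))"
  unfolding x_sandwich_def cl_sandwich_def ..

lemma dirac_sandwich_eq: "dirac_sandwich m P = (\<lambda>\<alpha>. \<Sum>i<m. \<Sum>j<m. cl_sandwich m i j (pder i (pder j P) \<alpha>))"
  unfolding dirac_sandwich_def cl_sandwich_def ..

text \<open>The key identity: \<open>\<langle>x R x, Q\<rangle>_{k+2} = \<langle>R, \<partial>Q\<partial>\<rangle>_k\<close>, obtained term by term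
  from the self-adjointness of \<open>e_i \<cdot> e_j\<close> and the adjointness of \<open>x_p\<close> and \<open>\<partial>_{x_p}\<close>.\<close>
lemma fischer_sandwich_adjoint:
  "fischer m (Suc (Suc k)) (x_sandwich m R) Q = fischer m k R (dirac_sandwich m Q)"
proof -
  have summand: "fischer m (Suc (Suc k)) (\<lambda>\<alpha>. cl_sandwich m i j (mulx i (mulx j R) \<alpha>)) Q =
      fischer m k R (\<lambda>\<alpha>. cl_sandwich m i j (pder i (pder j Q) \<alpha>))" if "i < m" "j < m" for i j
  proof -
    have "fischer m (Suc (Suc k)) (\<lambda>\<alpha>. cl_sandwich m i j (mulx i (mulx j R) \<alpha>)) Q =
        fischer m (Suc (Suc k)) (mulx i (mulx j R)) (\<lambda>\<alpha>. cl_sandwich m i j (Q \<alpha>))"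
      using that by (rule fischer_cl_sandwich)
    also have "\<dots> = fischer m k R (pder j (pder i (\<lambda>\<alpha>. cl_sandwich m i j (Q \<alpha>))))"
      using that by (simp add: fischer_mulx)
    also have "\<dots> = fischer m k R (\<lambda>\<alpha>. cl_sandwich m i j (pder i (pder j Q) \<alpha>))"
      by (simp add: pder_cl_sandwich pder_commute[of j i])
    finally show ?thesis .
  qed
  have sym: "fischer m n P P' = fischer m n P' P" for n P P'
    using pos_def_form.sym[OF fischer_pos_def_form] .
  have "fischer m (Suc (Suc k)) (x_sandwich m R) Q =
      (\<Sum>i<m. \<Sum>j<m. fischer m (Suc (Suc k)) (\<lambda>\<alpha>. cl_sandwich m i j (mulx i (mulx j R) \<alpha>)) Q)"
    by (simp add: x_sandwich_eq fischer_sum_left)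
  also have "\<dots> = (\<Sum>i<m. \<Sum>j<m. fischer m k (\<lambda>\<alpha>. cl_sandwich m i j (pder i (pder j Q) \<alpha>)) R)"
    by (simp add: summand sym[of k R])
  also have "\<dots> = fischer m k R (dirac_sandwich m Q)"
    by (simp add: dirac_sandwich_eq fischer_sum_left sym[of k R])
  finally show ?thesis .
qed

lemma mulx_hom:
  assumes R: "R \<in> hom_poly m k" and "p < m"
  shows "mulx p R \<in> hom_poly m (Suc k)"
  unfolding hom_poly_iff
proof (intro conjI allI impI)
  fix \<alpha> assume \<alpha>: "\<alpha> \<notin> monomials m (Suc k)"
  show "mulx p R \<alpha> = 0"
  proof (cases "0 < \<alpha> p")
    case True
    then have "(\<alpha>(p := \<alpha> p - 1))(p := Suc ((\<alpha>(p := \<alpha> p - 1)) p)) = \<alpha>" by auto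
    then have "\<alpha>(p := \<alpha> p - 1) \<notin> monomials m k"
      using \<alpha> monomials_raise[OF \<open>p < m\<close>, of "\<alpha>(p := \<alpha> p - 1)" k] by simp
    then show ?thesis using True R by (simp add: mulx_def hom_poly_iff)
  qed (simp add: mulx_def cl_zero_eq)
next
  show "cl_elem m (mulx p R \<alpha>)" for \<alpha>
    using R by (simp add: mulx_def hom_poly_iff cl_zero_eq cl_elem_def)
qed

lemma pder_hom:
  assumes P: "P \<in> hom_poly m (Suc k)" and "p < m"
  shows "pder p P \<in> hom_poly m k"
  using assms monomials_raise[OF \<open>p < m\<close>]
  by (simp add: hom_poly_iff pder_def cl_scale_eq cl_elem_def)

lemma sandwich_sum_hom:
  assumes "\<And>i j. i < m \<Longrightarrow> j < m \<Longrightarrow> F i j \<in> hom_poly m n"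
  shows "(\<lambda>\<alpha>. \<Sum>i<m. \<Sum>j<m. cl_sandwich m i j (F i j \<alpha>)) \<in> hom_poly m n"
proof -
  have "(\<lambda>\<alpha>. cl_sandwich m i j (F i j \<alpha>)) \<in> hom_poly m n" if "i < m" "j < m" for i j
    using assms[OF that] linear_0[OF linear_cl_sandwich]
    by (simp add: hom_poly_iff cl_sandwich_def cl_mult_elem)
  then have "(\<Sum>i<m. \<Sum>j<m. (\<lambda>\<alpha>. cl_sandwich m i j (F i j \<alpha>))) \<in> hom_poly m n"
    by (auto intro!: subspace_sum[OF subspace_hom_poly])
  moreover have "(\<Sum>i<m. \<Sum>j<m. (\<lambda>\<alpha>. cl_sandwich m i j (F i j \<alpha>))) =
      (\<lambda>\<alpha>. \<Sum>i<m. \<Sum>j<m. cl_sandwich m i j (F i j \<alpha>))"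
    by (rule ext) (simp only: sum_fun_apply)
  ultimately show ?thesis by simp
qed

lemma x_sandwich_hom: "R \<in> hom_poly m k \<Longrightarrow> x_sandwich m R \<in> hom_poly m (Suc (Suc k))"
  unfolding x_sandwich_eq by (intro sandwich_sum_hom mulx_hom)

lemma dirac_sandwich_hom: "P \<in> hom_poly m (Suc (Suc k)) \<Longrightarrow> dirac_sandwich m P \<in> hom_poly m k"
  unfolding dirac_sandwich_eq by (intro sandwich_sum_hom pder_hom)

lemma linear_mulx: "linear (mulx p)"
  by (rule linearI) (simp_all add: mulx_def fun_eq_iff cl_zero_eq)

lemma linear_x_sandwich: "linear (x_sandwich m)"
proof (rule linearI)
  show "x_sandwich m (R + S) = x_sandwich m R + x_sandwich m S" for R S
    unfolding x_sandwich_eq fun_eq_iff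
    by (simp add: linear_add[OF linear_mulx] linear_add[OF linear_cl_sandwich] sum.distrib)
  show "x_sandwich m (c *\<^sub>R R) = c *\<^sub>R x_sandwich m R" for c R
    unfolding x_sandwich_eq fun_eq_iff
    by (simp add: linear_scale[OF linear_mulx] linear_scale[OF linear_cl_sandwich] scaleR_sum_right)
qed

section \<open>A separating family of polynomials\<close>

definition unit_poly :: "(nat \<Rightarrow> nat) \<Rightarrow> nat set \<Rightarrow> cpoly" where
  "unit_poly \<beta> A = (\<lambda>\<alpha> B. if \<alpha> = \<beta> \<and> B = A then 1 else 0)"

definition unit_polys :: "nat \<Rightarrow> nat \<Rightarrow> cpoly set" where
  "unit_polys m k = (\<lambda>(\<beta>, A). unit_poly \<beta> A) ` (monomials m k \<times> Pow {..<m})"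

lemma unit_polys_hom: "unit_polys m k \<subseteq> hom_poly m k"
  by (auto simp: unit_polys_def unit_poly_def hom_poly_iff cl_elem_def intro!: ext)

lemma finite_unit_polys: "finite (unit_polys m k)"
  by (simp add: unit_polys_def finite_monomials)

lemma fischer_unit_poly:
  assumes "\<beta> \<in> monomials m k" and "A \<in> Pow {..<m}"
  shows "fischer m k (unit_poly \<beta> A) Y = mfact m \<beta> * Y \<beta> A"
proof -
  have "mfact m \<alpha> * cl_inner m (unit_poly \<beta> A \<alpha>) (Y \<alpha>) = (if \<alpha> = \<beta> then mfact m \<beta> * Y \<beta> A else 0)"
    for \<alpha>
    using assms(2) unfolding cl_inner_def unit_poly_def
    by (simp add: if_distrib[of "\<lambda>x. x * _"] sum.delta cong: if_cong del: Pow_iff)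
  then show ?thesis using assms(1) by (simp add: fischer_coeffs sum.delta finite_monomials)
qed

lemma unit_polys_separate:
  assumes "w \<in> hom_poly m k" and "\<forall>e\<in>unit_polys m k. fischer m k e w = 0"
  shows "w = 0"
proof -
  have "w \<beta> A = 0" if "\<beta> \<in> monomials m k" "A \<in> Pow {..<m}" for \<beta> A
  proof -
    have "unit_poly \<beta> A \<in> unit_polys m k"
      unfolding unit_polys_def using that by (intro image_eqI[where x="(\<beta>, A)"]) auto
    then have "fischer m k (unit_poly \<beta> A) w = 0" using assms(2) by blast
    then have "mfact m \<beta> * w \<beta> A = 0" by (simp only: fischer_unit_poly[OF that])
    then show ?thesis using mfact_pos[of m \<beta>] by simp
  qed
  then show ?thesis using assms(1) unfolding hom_poly_iff cl_elem_def fun_eq_iff zero_fun_def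
    by (metis PowI)
qed

lemma fischer_adjoint_pair:
  "adjoint_pair (fischer m (Suc (Suc k))) (hom_poly m (Suc (Suc k))) (fischer m k) (hom_poly m k)
     (x_sandwich m) (dirac_sandwich m) (unit_polys m k)"
proof (intro adjoint_pair.intro adjoint_pair_axioms.intro fischer_pos_def_form)
  show "x_sandwich m ` hom_poly m k \<subseteq> hom_poly m (Suc (Suc k))"
    using x_sandwich_hom by blast
  show "dirac_sandwich m ` hom_poly m (Suc (Suc k)) \<subseteq> hom_poly m k"
    using dirac_sandwich_hom by blast
qed (simp_all add: linear_x_sandwich fischer_sandwich_adjoint finite_unit_polys unit_polys_hom
    unit_polys_separate)

theorem mainTheorem13:
  fixes m k :: nat
  assumes "2 \<le> k"
  shows "hom_poly m k = {padd P Q | P Q. P \<in> infra m k \<and> Q \<in> xPx m k}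
     \<and> infra m k \<inter> xPx m k = {pzero}
     \<and> (\<forall>P\<in>infra m k. \<forall>Q\<in>xPx m k. fischer m k P Q = 0)
     \<and> infra m k = {P \<in> hom_poly m k. \<forall>Q\<in>xPx m k. fischer m k Q P = 0}"
proof -
  obtain n where k: "k = Suc (Suc n)"
    using assms by (metis add_2_eq_Suc le_Suc_ex)
  interpret adjoint_pair "fischer m k" "hom_poly m k" "fischer m n" "hom_poly m n"
    "x_sandwich m" "dirac_sandwich m" "unit_polys m n"
    unfolding k by (rule fischer_adjoint_pair)
  have infra: "infra m k = {P \<in> hom_poly m k. dirac_sandwich m P = 0}"
    unfolding infra_def pzero_eq ..
  have range: "xPx m k = x_sandwich m ` hom_poly m n"
    unfolding xPx_def k by simp
  show ?thesis
    unfolding infra range padd_eq pzero_eq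
    using kernel_plus_range kernel_inter_range kernel_orthogonal kernel_eq_orthogonal_complement
    by blast
qed

end
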